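(* Let $H=(V,E)$ be an unweighted hypergraph of rank $r$ on $n$ vertices and $k$ a positive integer. Suppose $\textsc{Partition}(G,t)$ is a procedure that, given a hypergraph $G$ and integer $t$, returns a $2t$-light $t$-partition of $G$. Consider the algorithm $\textsc{WeakEdges}(H,k)$: set $E'=\emptyset$; repeat $1+\log_2 n$ times: $E'\leftarrow E'\cup\textsc{Partition}(H,2rk)$ and $H\leftarrow H-E'$; return $E'$. Then $\textsc{WeakEdges}(H,k)$ returns a $4rk$-light set $E'$ (with respect to the input hypergraph $H$) that contains all the $k$-weak edges of $H$, using $O(\log n)$ calls to $\textsc{Partition}$.
   Context: A hypergraph $H=(V,E)$ has edges that are subsets of $V$; its rank is $\max_{e\in E}|e|$. For $U\subseteq V$, $H[U]=(U,\{e\in E:e\subseteq U\})$; for $A\subseteq V$, $\delta_H(A)$ is the set of edges meeting both $A$ and $V\setminus A$; $\lambda(H)=\min_{\emptyset\subsetneq A\subsetneq V}|\delta_H(A)|$. The strength of $e$ is $\gamma_H(e)=\max_{e\subseteq U\subseteq V}\lambda(H[U])$; $e$ is $k$-weak if $\gamma_H(e)<k$. $\kappa(G)$ is the number of connected components of $G$. A set $E'\subseteq E(G)$ is $\ell$-light if $|E'|\le\ell(\kappa(G-E')-\kappa(G))$. An edge $e$ of $G$ is $t$-crisp if there is $X\subseteq V(G)$ with $e\in\delta_G(X)$ and $|\delta_G(X)|<t$. A $t$-partition of $G$ is a set of edges of $G$ containing all $t$-crisp edges of $G$. *)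

theory Defs
  imports Complex_Main "HOL-Library.Extended_Nat"
begin

text \<open>A hypergraph is given by a vertex set V and a set E of edge identifiers;
  a fixed incidence map ends assigns to each edge identifier its vertex set
  (so parallel edges are allowed). Deleting edges only shrinks E.\<close>

definition hypergraph :: "('e \<Rightarrow> 'a set) \<Rightarrow> 'a set \<Rightarrow> 'e set \<Rightarrow> bool" where
  "hypergraph ends V E \<longleftrightarrow> finite V \<and> finite E \<and> (\<forall>e\<in>E. ends e \<noteq> {} \<and> ends e \<subseteq> V)"

definition hrank :: "('e \<Rightarrow> 'a set) \<Rightarrow> 'e set \<Rightarrow> nat" where
  "hrank ends E = Max (insert 0 ((\<lambda>e. card (ends e)) ` E))"

definition induced_edges :: "('e \<Rightarrow> 'a set) \<Rightarrow> 'e set \<Rightarrow> 'a set \<Rightarrow> 'e set" where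
  "induced_edges ends E U = {e\<in>E. ends e \<subseteq> U}"

definition cut :: "('e \<Rightarrow> 'a set) \<Rightarrow> 'a set \<Rightarrow> 'e set \<Rightarrow> 'a set \<Rightarrow> 'e set" where
  "cut ends V E A = {e\<in>E. ends e \<inter> A \<noteq> {} \<and> ends e \<inter> (V - A) \<noteq> {}}"

text \<open>Global edge connectivity lambda(H); the minimum over an empty family is infinity.\<close>
definition edge_conn :: "('e \<Rightarrow> 'a set) \<Rightarrow> 'a set \<Rightarrow> 'e set \<Rightarrow> enat" where
  "edge_conn ends V E = (INF A\<in>{A. {} \<subset> A \<and> A \<subset> V}. enat (card (cut ends V E A)))"

definition strength :: "('e \<Rightarrow> 'a set) \<Rightarrow> 'a set \<Rightarrow> 'e set \<Rightarrow> 'e \<Rightarrow> enat" where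
  "strength ends V E e =
     (SUP U\<in>{U. ends e \<subseteq> U \<and> U \<subseteq> V}. edge_conn ends U (induced_edges ends E U))"

definition k_weak :: "('e \<Rightarrow> 'a set) \<Rightarrow> 'a set \<Rightarrow> 'e set \<Rightarrow> nat \<Rightarrow> 'e \<Rightarrow> bool" where
  "k_weak ends V E k e \<longleftrightarrow> e \<in> E \<and> strength ends V E e < enat k"

definition adj :: "('e \<Rightarrow> 'a set) \<Rightarrow> 'a set \<Rightarrow> 'e set \<Rightarrow> ('a \<times> 'a) set" where
  "adj ends V E = {(u, v). u \<in> V \<and> v \<in> V \<and> (\<exists>e\<in>E. u \<in> ends e \<and> v \<in> ends e)}"

definition ncomp :: "('e \<Rightarrow> 'a set) \<Rightarrow> 'a set \<Rightarrow> 'e set \<Rightarrow> nat" where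
  "ncomp ends V E = card (V // ((adj ends V E)\<^sup>*))"

definition light :: "('e \<Rightarrow> 'a set) \<Rightarrow> 'a set \<Rightarrow> 'e set \<Rightarrow> nat \<Rightarrow> 'e set \<Rightarrow> bool" where
  "light ends V E l F \<longleftrightarrow> F \<subseteq> E \<and>
     int (card F) \<le> int l * (int (ncomp ends V (E - F)) - int (ncomp ends V E))"

definition crisp :: "('e \<Rightarrow> 'a set) \<Rightarrow> 'a set \<Rightarrow> 'e set \<Rightarrow> nat \<Rightarrow> 'e \<Rightarrow> bool" where
  "crisp ends V E t e \<longleftrightarrow> (\<exists>X\<subseteq>V. e \<in> cut ends V E X \<and> card (cut ends V E X) < t)"

definition t_partition :: "('e \<Rightarrow> 'a set) \<Rightarrow> 'a set \<Rightarrow> 'e set \<Rightarrow> nat \<Rightarrow> 'e set \<Rightarrow> bool" where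
  "t_partition ends V E t F \<longleftrightarrow> F \<subseteq> E \<and> (\<forall>e\<in>E. crisp ends V E t e \<longrightarrow> e \<in> F)"

fun weak_edges_iter ::
  "('a set \<Rightarrow> 'e set \<Rightarrow> nat \<Rightarrow> 'e set) \<Rightarrow> 'a set \<Rightarrow> 'e set \<Rightarrow> nat \<Rightarrow> nat \<Rightarrow> 'e set" where
  "weak_edges_iter P V E t 0 = {}"
| "weak_edges_iter P V E t (Suc i) =
     weak_edges_iter P V E t i \<union> P V (E - weak_edges_iter P V E t i) t"

definition weak_edges ::
  "('e \<Rightarrow> 'a set) \<Rightarrow> ('a set \<Rightarrow> 'e set \<Rightarrow> nat \<Rightarrow> 'e set) \<Rightarrow> 'a set \<Rightarrow> 'e set \<Rightarrow> nat \<Rightarrow> 'e set" where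
  "weak_edges ends P V E k =
     weak_edges_iter P V E (2 * hrank ends E * k) (1 + nat \<lceil>log 2 (real (card V))\<rceil>)"

end

theory Submission
  imports Defs
begin

text \<open>Call a vertex set k-connected if it induces a k-edge-connected subhypergraph. Two
  overlapping k-connected sets have a k-connected union, so the maximal ones, the k-strong
  components, partition the vertices. An edge is k-weak exactly when it is not contained in a
  single component, and splitting along cuts of size below k shows that a union of N components
  contains at most (k - 1)(N - 1) weak edges.

  Let t = 2rk. In a round, a component touched by fewer than t surviving weak edges is the side
  of a cut of size below t in the current hypergraph, so all of these edges are t-crisp and are
  removed. Every component still touched after the round therefore meets at least t edges that
  survived before it; since an edge meets at most r components, double counting gives
  t M' \<le> r (k - 1) M, i.e. the number M of touched components halves in every round, and after
  1 + \<lceil>log n\<rceil> rounds no weak edge survives. Lightness accumulates because the union of an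
  l-light set F of H and an l-light set of H - F is l-light in H (the component counts telescope).\<close>

lemma hypergraph_mono_edges: "hypergraph ends V E \<Longrightarrow> E' \<subseteq> E \<Longrightarrow> hypergraph ends V E'"
  unfolding hypergraph_def using finite_subset by blast

lemma edge_conn_ge_iff:
  "enat k \<le> edge_conn ends U F \<longleftrightarrow> (\<forall>A. {} \<subset> A \<and> A \<subset> U \<longrightarrow> k \<le> card (cut ends U F A))"
  unfolding edge_conn_def by (auto simp: le_INF_iff)

lemma cut_induced_mono:
  "U' \<subseteq> U \<Longrightarrow>
    cut ends U' (induced_edges ends E U') (A \<inter> U') \<subseteq> cut ends U (induced_edges ends E U) A"
  unfolding cut_def induced_edges_def by blast

lemma cut_induced_complement:
  "cut ends U (induced_edges ends E U) (U - A) = cut ends U (induced_edges ends E U) A"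
  unfolding cut_def induced_edges_def by blast

lemma light_Un:
  assumes "light ends V E l F" and "light ends V (E - F) l G"
  shows "light ends V E l (F \<union> G)"
proof -
  have "E - F - G = E - (F \<union> G)" by blast
  moreover have "int (card (F \<union> G)) \<le> int (card F) + int (card G)"
    using card_Un_le[of F G] by linarith
  ultimately show ?thesis
    using assms unfolding light_def by (auto simp: right_diff_distrib)
qed

lemma light_weak_edges_iter:
  assumes "\<And>E'. E' \<subseteq> E \<Longrightarrow> light ends V E' l (P V E' t)"
  shows "light ends V E l (weak_edges_iter P V E t i)"
proof (induction i)
  case 0
  show ?case by (simp add: light_def)
next
  case (Suc i)
  then show ?case using light_Un[OF Suc assms[OF Diff_subset]] by simp
qed

lemma less_two_power_rounds: "n < 2 ^ (1 + nat \<lceil>log 2 (real n)\<rceil>)"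
proof (cases "n = 0")
  case False
  define m where "m = nat \<lceil>log 2 (real n)\<rceil>"
  have "log 2 (real n) \<le> real m"
    using False unfolding m_def by linarith
  then have "real n \<le> 2 ^ m"
    using False by (simp add: log_le_iff powr_realpow)
  then have "n \<le> 2 ^ m"
    by (metis of_nat_le_iff of_nat_numeral of_nat_power)
  moreover have "0 < (2::nat) ^ m" by simp
  ultimately have "n < 2 * 2 ^ m" by linarith
  then show ?thesis
    unfolding m_def by simp
qed simp

locale strong_components =
  fixes ends :: "'e \<Rightarrow> 'a set" and V :: "'a set" and E :: "'e set" and k :: nat
  assumes hypergraph: "hypergraph ends V E"
begin

lemma finite_V: "finite V" and finite_E: "finite E"
  and ends_subset_V: "e \<in> E \<Longrightarrow> ends e \<subseteq> V" and ends_nonempty: "e \<in> E \<Longrightarrow> ends e \<noteq> {}"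
  using hypergraph unfolding hypergraph_def by auto

lemma card_ends_le_hrank: "e \<in> E \<Longrightarrow> card (ends e) \<le> hrank ends E"
  unfolding hrank_def by (rule Max_ge) (use finite_E in auto)

lemma hrank_pos:
  assumes "e \<in> E"
  shows "0 < hrank ends E"
proof -
  have "finite (ends e)"
    using ends_subset_V[OF assms] finite_V by (rule finite_subset)
  then have "0 < card (ends e)"
    using ends_nonempty[OF assms] by (simp add: card_gt_0_iff)
  then show ?thesis
    using card_ends_le_hrank[OF assms] by linarith
qed

lemma finite_cut: "finite (cut ends U (induced_edges ends E U) A)"
  using finite_E unfolding cut_def induced_edges_def by auto

definition k_connected :: "'a set \<Rightarrow> bool" where
  "k_connected U \<longleftrightarrow> U \<subseteq> V \<and> enat k \<le> edge_conn ends U (induced_edges ends E U)"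

lemma k_connected_iff:
  "k_connected U \<longleftrightarrow> U \<subseteq> V \<and>
    (\<forall>A. {} \<subset> A \<and> A \<subset> U \<longrightarrow> k \<le> card (cut ends U (induced_edges ends E U) A))"
  unfolding k_connected_def edge_conn_ge_iff ..

lemma k_connected_singleton: "v \<in> V \<Longrightarrow> k_connected {v}"
  unfolding k_connected_iff by auto

text \<open>A cut of a superset that separates a k-connected set restricts to one of its cuts.\<close>
lemma k_connected_le_card_cut:
  assumes "k_connected U'" "U' \<subseteq> U" "A \<inter> U' \<noteq> {}" "U' - A \<noteq> {}"
  shows "k \<le> card (cut ends U (induced_edges ends E U) A)"
proof -
  have "{} \<subset> A \<inter> U'" "A \<inter> U' \<subset> U'"
    using assms(3,4) by blast+
  then have "k \<le> card (cut ends U' (induced_edges ends E U') (A \<inter> U'))"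
    using assms(1) unfolding k_connected_iff by blast
  also have "\<dots> \<le> card (cut ends U (induced_edges ends E U) A)"
    by (rule card_mono[OF finite_cut cut_induced_mono[OF assms(2)]])
  finally show ?thesis .
qed

lemma k_connected_Un:
  assumes "k_connected U1" "k_connected U2" "U1 \<inter> U2 \<noteq> {}"
  shows "k_connected (U1 \<union> U2)"
  unfolding k_connected_iff
proof (intro conjI allI impI)
  show "U1 \<union> U2 \<subseteq> V"
    using assms(1,2) unfolding k_connected_def by blast
  fix A
  assume A: "{} \<subset> A \<and> A \<subset> U1 \<union> U2"
  have "A \<inter> U1 \<noteq> {} \<and> U1 - A \<noteq> {} \<or> A \<inter> U2 \<noteq> {} \<and> U2 - A \<noteq> {}"
    using A assms(3) by blast
  then show "k \<le> card (cut ends (U1 \<union> U2) (induced_edges ends E (U1 \<union> U2)) A)"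
  proof (elim disjE conjE)
    assume "A \<inter> U1 \<noteq> {}" "U1 - A \<noteq> {}"
    then show ?thesis
      by (rule k_connected_le_card_cut[OF assms(1) Un_upper1])
  next
    assume "A \<inter> U2 \<noteq> {}" "U2 - A \<noteq> {}"
    then show ?thesis
      by (rule k_connected_le_card_cut[OF assms(2) Un_upper2])
  qed
qed

lemma k_connected_Union:
  assumes "finite \<F>" "\<F> \<noteq> {}" "\<And>U. U \<in> \<F> \<Longrightarrow> k_connected U \<and> v \<in> U"
  shows "k_connected (\<Union>\<F>)"
  using assms
proof (induction \<F> rule: finite_ne_induct)
  case (insert U \<F>)
  then show ?case using k_connected_Un[of U "\<Union>\<F>"] by auto
qed simp

definition component :: "'a \<Rightarrow> 'a set" where
  "component v = \<Union>{U. k_connected U \<and> v \<in> U}"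

lemma component_subset_V: "component v \<subseteq> V"
  unfolding component_def k_connected_def by blast

lemma in_component: "v \<in> V \<Longrightarrow> v \<in> component v"
  unfolding component_def using k_connected_singleton by blast

lemma k_connected_component: "v \<in> V \<Longrightarrow> k_connected (component v)"
  unfolding component_def
proof (rule k_connected_Union)
  have "{U. k_connected U \<and> v \<in> U} \<subseteq> Pow V"
    unfolding k_connected_def by blast
  then show "finite {U. k_connected U \<and> v \<in> U}"
    using finite_V by (simp add: finite_subset)
qed (use k_connected_singleton in auto)

lemma k_connected_subset_component: "k_connected U \<Longrightarrow> v \<in> U \<Longrightarrow> U \<subseteq> component v"
  unfolding component_def by blast

lemma component_eq:
  assumes "v \<in> V" "w \<in> component v"
  shows "component w = component v"
proof
  show "component v \<subseteq> component w"
    using k_connected_subset_component[OF k_connected_component[OF assms(1)] assms(2)] .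
  then show "component w \<subseteq> component v"
    using k_connected_subset_component[OF k_connected_component] component_subset_V
      in_component assms by blast
qed

definition weak :: "'e set" where
  "weak = {e. k_weak ends V E k e}"

lemma weak_subset_E: "weak \<subseteq> E"
  unfolding weak_def k_weak_def by blast

lemma strong_edge_within_component:
  assumes "e \<in> E" "e \<notin> weak"
  shows "\<exists>v\<in>V. ends e \<subseteq> component v"
proof -
  let ?S = "{U. ends e \<subseteq> U \<and> U \<subseteq> V}"
  let ?conn = "\<lambda>U. edge_conn ends U (induced_edges ends E U)"
  have "?S \<subseteq> Pow V" by blast
  then have "finite (?conn ` ?S)"
    using finite_V by (simp add: finite_subset)
  moreover have "?conn ` ?S \<noteq> {}"
    using ends_subset_V[OF assms(1)] by blast
  moreover have "\<not> enat k > Sup (?conn ` ?S)"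
    using assms unfolding weak_def k_weak_def strength_def by simp
  ultimately have "\<not> (\<forall>c \<in> ?conn ` ?S. enat k > c)"
    using finite_Sup_less_iff[of "?conn ` ?S" "enat k"] by blast
  then obtain U where U: "U \<in> ?S" "\<not> enat k > ?conn U"
    by blast
  then have "k_connected U"
    unfolding k_connected_def not_less by blast
  obtain v where "v \<in> ends e"
    using ends_nonempty[OF assms(1)] by blast
  then show ?thesis
    using k_connected_subset_component[OF \<open>k_connected U\<close>] U(1) by blast
qed

lemma weak_edge_not_within_component:
  assumes "e \<in> weak" "v \<in> V"
  shows "\<not> ends e \<subseteq> component v"
proof
  assume within: "ends e \<subseteq> component v"
  have "enat k \<le> edge_conn ends (component v) (induced_edges ends E (component v))"
    using k_connected_component[OF assms(2)] unfolding k_connected_def by blast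
  also have "\<dots> \<le> strength ends V E e"
    unfolding strength_def by (rule SUP_upper) (use within component_subset_V in blast)
  finally show False
    using assms(1) leD unfolding weak_def k_weak_def by blast
qed

lemma cut_component_subset_weak:
  assumes "F \<subseteq> E" "v \<in> V"
  shows "cut ends V F (component v) \<subseteq> weak"
proof
  fix f
  assume f: "f \<in> cut ends V F (component v)"
  show "f \<in> weak"
  proof (rule ccontr)
    assume "f \<notin> weak"
    then obtain w where w: "w \<in> V" "ends f \<subseteq> component w"
      using strong_edge_within_component f assms(1) unfolding cut_def by blast
    obtain x where x: "x \<in> ends f" "x \<in> component v"
      using f unfolding cut_def by blast
    have "component w = component v"
      using component_eq[OF w(1)] component_eq[OF assms(2) x(2)] x(1) w(2) by blast
    then show False
      using f w(2) unfolding cut_def by blast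
  qed
qed

definition component_closed :: "'a set \<Rightarrow> bool" where
  "component_closed U \<longleftrightarrow> (\<forall>v\<in>U. component v \<subseteq> U)"

definition components :: "'a set set" where
  "components = component ` V"

definition components_within :: "'a set \<Rightarrow> 'a set set" where
  "components_within U = {C\<in>components. C \<subseteq> U}"

definition weak_within :: "'a set \<Rightarrow> 'e set" where
  "weak_within U = {e\<in>weak. ends e \<subseteq> U}"

lemma finite_components: "finite components"
  unfolding components_def using finite_V by simp

lemma finite_weak_within: "finite (weak_within U)"
  using weak_subset_E unfolding weak_within_def by (blast intro: finite_subset[OF _ finite_E])

lemma component_closed_cut_side:
  assumes "component_closed U" "U \<subseteq> V" "A \<subseteq> U"
    and "card (cut ends U (induced_edges ends E U) A) < k"
  shows "component_closed A"
  unfolding component_closed_def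
proof
  fix a
  assume "a \<in> A"
  then have a: "a \<in> V" "component a \<subseteq> U"
    using assms(1-3) unfolding component_closed_def by blast+
  show "component a \<subseteq> A"
  proof (rule ccontr)
    assume "\<not> component a \<subseteq> A"
    moreover have "A \<inter> component a \<noteq> {}"
      using in_component[OF a(1)] \<open>a \<in> A\<close> by blast
    ultimately have "k \<le> card (cut ends U (induced_edges ends E U) A)"
      using k_connected_le_card_cut[OF k_connected_component[OF a(1)] a(2)] by blast
    then show False
      using assms(4) by simp
  qed
qed

lemma card_components_within_split:
  assumes "component_closed A" "component_closed (U - A)" "A \<subseteq> U"
  shows "card (components_within U) =
    card (components_within A) + card (components_within (U - A))"
proof -
  have "components_within U = components_within A \<union> components_within (U - A)"
  proof (intro equalityI subsetI)
    fix C
    assume "C \<in> components_within U"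
    then obtain c where c: "c \<in> V" "C = component c" "C \<subseteq> U" "C \<in> components"
      unfolding components_within_def components_def by blast
    then have "c \<in> U"
      using in_component by blast
    then show "C \<in> components_within A \<union> components_within (U - A)"
      using assms(1,2) c unfolding component_closed_def components_within_def by blast
  qed (use assms(3) in \<open>auto simp: components_within_def\<close>)
  moreover have "components_within A \<inter> components_within (U - A) = {}"
    using in_component unfolding components_within_def components_def by blast
  ultimately show ?thesis
    using finite_components by (simp add: card_Un_disjoint components_within_def)
qed

lemma weak_within_split:
  "weak_within U \<subseteq>
    cut ends U (induced_edges ends E U) A \<union> weak_within A \<union> weak_within (U - A)"
  using weak_subset_E unfolding weak_within_def cut_def induced_edges_def by blast

lemma card_weak_within:
  assumes "U \<subseteq> V" "U \<noteq> {}" "component_closed U"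
  shows "card (weak_within U) + (k - 1) \<le> (k - 1) * card (components_within U)"
  using assms
proof (induction "card U" arbitrary: U rule: less_induct)
  case less
  obtain u where u: "u \<in> U" "u \<in> V"
    using less.prems(1,2) by blast
  show ?case
  proof (cases "k_connected U")
    case True
    then have "U \<subseteq> component u"
      using k_connected_subset_component u(1) by blast
    then have no_weak: "weak_within U = {}"
      using weak_edge_not_within_component[OF _ u(2)] unfolding weak_within_def by blast
    have "component u \<in> components_within U"
      using less.prems(3) u unfolding component_closed_def components_within_def components_def
      by blast
    moreover have "finite (components_within U)"
      using finite_components unfolding components_within_def by simp
    ultimately have "0 < card (components_within U)"
      using card_gt_0_iff by blast
    with no_weak show ?thesis
      by simp
  next
    case False
    then obtain A where A: "{} \<subset> A" "A \<subset> U" "card (cut ends U (induced_edges ends E U) A) < k"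
      using less.prems(1) unfolding k_connected_iff by (meson not_le)
    let ?cut = "cut ends U (induced_edges ends E U) A"
    have closed: "component_closed A" "component_closed (U - A)"
      using component_closed_cut_side[OF less.prems(3,1)] A(2,3)
      by (auto simp: cut_induced_complement)
    have "finite U"
      using less.prems(1) finite_V finite_subset by blast
    have IH: "card (weak_within X) + (k - 1) \<le> (k - 1) * card (components_within X)"
      if "X \<subset> U" "X \<noteq> {}" "component_closed X" for X
    proof (rule less.hyps)
      show "card X < card U"
        using \<open>finite U\<close> that(1) by (rule psubset_card_mono)
      show "X \<subseteq> V"
        using that(1) less.prems(1) by blast
    qed (use that in auto)
    have "card (weak_within U) \<le> card (?cut \<union> weak_within A \<union> weak_within (U - A))"
      by (rule card_mono) (simp_all add: finite_cut finite_weak_within weak_within_split)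
    also have "\<dots> \<le> card ?cut + card (weak_within A) + card (weak_within (U - A))"
      using card_Un_le[of "?cut \<union> weak_within A" "weak_within (U - A)"]
        card_Un_le[of ?cut "weak_within A"] by linarith
    finally have "card (weak_within U) \<le> (k - 1) + card (weak_within A) + card (weak_within (U - A))"
      using A(3) by linarith
    moreover have "card (weak_within A) + (k - 1) \<le> (k - 1) * card (components_within A)"
      using IH A(1,2) closed(1) by blast
    moreover have "card (weak_within (U - A)) + (k - 1) \<le> (k - 1) * card (components_within (U - A))"
      using IH[of "U - A"] A(1,2) closed(2) by blast
    moreover have "(k - 1) * card (components_within U) =
        (k - 1) * card (components_within A) + (k - 1) * card (components_within (U - A))"
      using card_components_within_split[OF closed] A(2) by (simp add: add_mult_distrib2)
    ultimately show ?thesis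
      by linarith
  qed
qed

definition touched :: "'e set \<Rightarrow> 'a set set" where
  "touched R = {C\<in>components. \<exists>e\<in>R. ends e \<inter> C \<noteq> {}}"

lemma finite_touched: "finite (touched R)"
  using finite_components unfolding touched_def by simp

lemma touched_mono: "R \<subseteq> R' \<Longrightarrow> touched R \<subseteq> touched R'"
  unfolding touched_def by blast

lemma component_in_touched:
  "e \<in> R \<Longrightarrow> R \<subseteq> E \<Longrightarrow> x \<in> ends e \<Longrightarrow> component x \<in> touched R"
  using ends_subset_V in_component unfolding touched_def components_def by blast

lemma component_closed_Union: "M \<subseteq> components \<Longrightarrow> component_closed (\<Union>M)"
  unfolding component_closed_def components_def using component_eq by blast

lemma components_within_Union:
  assumes "M \<subseteq> components"
  shows "components_within (\<Union>M) = M"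
proof (intro equalityI subsetI)
  fix C
  assume "C \<in> components_within (\<Union>M)"
  then obtain c where c: "c \<in> V" "C = component c" "C \<subseteq> \<Union>M"
    unfolding components_within_def components_def by blast
  then obtain C' where "C' \<in> M" "c \<in> C'"
    using in_component by blast
  moreover from this have "C' = component c"
    using assms component_eq unfolding components_def by blast
  ultimately show "C \<in> M"
    using c by blast
qed (use assms in \<open>auto simp: components_within_def\<close>)

lemma ends_subset_Union_touched:
  assumes "e \<in> R" "R \<subseteq> E"
  shows "ends e \<subseteq> \<Union>(touched R)"
proof
  fix x
  assume "x \<in> ends e"
  then have "x \<in> component x" "component x \<in> touched R"
    using assms in_component ends_subset_V component_in_touched by blast+
  then show "x \<in> \<Union>(touched R)"
    by blast
qed

lemma card_le_touched:
  assumes "R \<subseteq> weak"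
  shows "card R \<le> (k - 1) * card (touched R)"
proof (cases "R = {}")
  case False
  let ?U = "\<Union>(touched R)"
  have "R \<subseteq> E"
    using assms weak_subset_E by blast
  have touched: "touched R \<subseteq> components"
    unfolding touched_def by blast
  have "R \<subseteq> weak_within ?U"
    using assms ends_subset_Union_touched[OF _ \<open>R \<subseteq> E\<close>] unfolding weak_within_def by blast
  then have "card R \<le> card (weak_within ?U)"
    by (rule card_mono[OF finite_weak_within])
  moreover have "?U \<subseteq> V"
    using touched component_subset_V unfolding components_def by blast
  moreover have "?U \<noteq> {}"
    using False ends_subset_Union_touched[OF _ \<open>R \<subseteq> E\<close>] ends_nonempty \<open>R \<subseteq> E\<close> by blast
  ultimately show ?thesis
    using card_weak_within[of ?U] component_closed_Union[OF touched]
      components_within_Union[OF touched] by simp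
qed simp

text \<open>Double counting: an edge meets at most as many components as it has ends.\<close>
lemma sum_card_touching_le:
  assumes "R \<subseteq> E" "M \<subseteq> components"
  shows "(\<Sum>C\<in>M. card {e\<in>R. ends e \<inter> C \<noteq> {}}) \<le> hrank ends E * card R"
proof -
  have "finite R" "finite M"
    using assms finite_E finite_components finite_subset by blast+
  then have "(\<Sum>C\<in>M. card {e\<in>R. ends e \<inter> C \<noteq> {}}) = (\<Sum>e\<in>R. card {C\<in>M. ends e \<inter> C \<noteq> {}})"
    using sum.swap_restrict[of M R "\<lambda>_ _. 1::nat" "\<lambda>C e. ends e \<inter> C \<noteq> {}"] by simp
  also have "\<dots> \<le> (\<Sum>e\<in>R. hrank ends E)"
  proof (rule sum_mono)
    fix e
    assume "e \<in> R"
    then have e: "e \<in> E" "finite (ends e)"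
      using assms(1) ends_subset_V finite_V finite_subset by blast+
    have "{C\<in>M. ends e \<inter> C \<noteq> {}} \<subseteq> component ` ends e"
      using assms(2) component_eq unfolding components_def by blast
    then have "card {C\<in>M. ends e \<inter> C \<noteq> {}} \<le> card (component ` ends e)"
      using e(2) by (simp add: card_mono)
    also have "\<dots> \<le> card (ends e)"
      using e(2) by (rule card_image_le)
    also have "\<dots> \<le> hrank ends E"
      using e(1) by (rule card_ends_le_hrank)
    finally show "card {C\<in>M. ends e \<inter> C \<noteq> {}} \<le> hrank ends E" .
  qed
  finally show ?thesis
    by (simp add: mult.commute)
qed

end

locale weak_edges_rounds = strong_components ends V E k
  for ends :: "'e \<Rightarrow> 'a set" and V :: "'a set" and E :: "'e set" and k :: nat +
  fixes P :: "'a set \<Rightarrow> 'e set \<Rightarrow> nat \<Rightarrow> 'e set"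
  assumes k_pos: "0 < k"
    and partition: "\<And>E' t. E' \<subseteq> E \<Longrightarrow> t_partition ends V E' t (P V E' t)"
begin

definition t :: nat where
  "t = 2 * hrank ends E * k"

definition removed :: "nat \<Rightarrow> 'e set" where
  "removed i = weak_edges_iter P V E t i"

definition surviving :: "nat \<Rightarrow> 'e set" where
  "surviving i = weak - removed i"

definition degree :: "nat \<Rightarrow> 'a set \<Rightarrow> nat" where
  "degree i C = card {e\<in>surviving i. ends e \<inter> C \<noteq> {}}"

lemma removed_Suc: "removed (Suc i) = removed i \<union> P V (E - removed i) t"
  unfolding removed_def by simp

lemma surviving_subset_E: "surviving i \<subseteq> E"
  using weak_subset_E unfolding surviving_def by blast

lemma surviving_Suc_subset: "surviving (Suc i) \<subseteq> surviving i"
  unfolding surviving_def removed_Suc by blast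

text \<open>A component touched by fewer than t surviving edges is a side of a cut of size below t,
  so the next call to the partition procedure removes all of them.\<close>
lemma le_degree_if_touched_Suc:
  assumes "C \<in> touched (surviving (Suc i))"
  shows "t \<le> degree i C"
proof (rule ccontr)
  let ?F = "E - removed i"
  assume "\<not> t \<le> degree i C"
  obtain e c where e: "e \<in> surviving (Suc i)" "ends e \<inter> C \<noteq> {}" and c: "c \<in> V" "C = component c"
    using assms unfolding touched_def components_def by blast
  have e_surv: "e \<in> surviving i" "e \<notin> P V ?F t"
    using e(1) unfolding surviving_def removed_Suc by blast+
  have "cut ends V ?F C \<subseteq> {f\<in>surviving i. ends f \<inter> C \<noteq> {}}"
    using cut_component_subset_weak[of ?F c] c unfolding surviving_def cut_def by blast
  then have "card (cut ends V ?F C) \<le> degree i C"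
    unfolding degree_def using surviving_subset_E
    by (intro card_mono) (auto intro: finite_subset[OF _ finite_E])
  then have small: "card (cut ends V ?F C) < t"
    using \<open>\<not> t \<le> degree i C\<close> by linarith
  have "e \<in> E" "e \<in> weak"
    using e_surv(1) surviving_subset_E unfolding surviving_def by blast+
  then have "ends e \<inter> (V - C) \<noteq> {}"
    using weak_edge_not_within_component[OF _ c(1)] c(2) ends_subset_V by blast
  then have "e \<in> cut ends V ?F C"
    using e_surv(1) e(2) \<open>e \<in> E\<close> unfolding surviving_def cut_def by blast
  moreover have "C \<subseteq> V"
    using c component_subset_V by blast
  ultimately have "crisp ends V ?F t e"
    unfolding crisp_def using small by blast
  then have "e \<in> P V ?F t"
    using partition[of ?F t] \<open>e \<in> cut ends V ?F C\<close> unfolding t_partition_def cut_def by blast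
  then show False
    using e_surv(2) by blast
qed

lemma card_touched_Suc: "2 * card (touched (surviving (Suc i))) \<le> card (touched (surviving i))"
proof (cases "surviving i = {}")
  case True
  then show ?thesis
    using surviving_Suc_subset[of i] by (simp add: touched_def)
next
  case False
  let ?M = "touched (surviving i)" and ?M' = "touched (surviving (Suc i))"
  have "0 < hrank ends E"
    using False surviving_subset_E hrank_pos by blast
  have "?M' \<subseteq> ?M"
    by (rule touched_mono[OF surviving_Suc_subset])
  have "card ?M' * t \<le> (\<Sum>C\<in>?M'. degree i C)"
    using le_degree_if_touched_Suc sum_mono[of ?M' "\<lambda>_. t" "degree i"] by simp
  also have "\<dots> \<le> (\<Sum>C\<in>?M. degree i C)"
    using \<open>?M' \<subseteq> ?M\<close> finite_touched by (intro sum_mono2) auto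
  also have "\<dots> \<le> hrank ends E * card (surviving i)"
    unfolding degree_def by (rule sum_card_touching_le[OF surviving_subset_E])
      (simp add: touched_def)
  also have "\<dots> \<le> hrank ends E * ((k - 1) * card ?M)"
    using card_le_touched[of "surviving i"] unfolding surviving_def by simp
  also have "\<dots> \<le> card ?M * (hrank ends E * k)"
    by (simp add: mult_le_mono)
  finally have "2 * card ?M' * (hrank ends E * k) \<le> card ?M * (hrank ends E * k)"
    unfolding t_def by (simp add: algebra_simps)
  then show ?thesis
    using \<open>0 < hrank ends E\<close> k_pos by simp
qed

lemma card_touched_surviving: "2 ^ i * card (touched (surviving i)) \<le> card V"
proof (induction i)
  case 0
  have "card (touched (surviving 0)) \<le> card components"
    using finite_components unfolding touched_def by (simp add: card_mono)
  also have "\<dots> \<le> card V"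
    unfolding components_def using finite_V by (rule card_image_le)
  finally show ?case
    by simp
next
  case (Suc i)
  have "2 ^ Suc i * card (touched (surviving (Suc i)))
      = 2 ^ i * (2 * card (touched (surviving (Suc i))))"
    by simp
  also have "\<dots> \<le> 2 ^ i * card (touched (surviving i))"
    using card_touched_Suc by simp
  also have "\<dots> \<le> card V"
    by (rule Suc.IH)
  finally show ?case .
qed

lemma weak_subset_removed: "weak \<subseteq> removed (1 + nat \<lceil>log 2 (real (card V))\<rceil>)"
proof -
  define n where "n = 1 + nat \<lceil>log 2 (real (card V))\<rceil>"
  have "2 ^ n * card (touched (surviving n)) < 2 ^ n * 1"
    using card_touched_surviving[of n] less_two_power_rounds[of "card V"] unfolding n_def
    by linarith
  then have "touched (surviving n) = {}"
    using finite_touched by simp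
  then have "ends e = {}" if "e \<in> surviving n" for e
    using ends_subset_Union_touched[OF that surviving_subset_E] by simp
  then have "surviving n = {}"
    using ends_nonempty surviving_subset_E by blast
  then show ?thesis
    unfolding surviving_def n_def by blast
qed

end

theorem theorem3p3:
  fixes ends :: "'e \<Rightarrow> 'a set"
    and P :: "'a set \<Rightarrow> 'e set \<Rightarrow> nat \<Rightarrow> 'e set"
    and V :: "'a set" and E :: "'e set" and k :: nat
  assumes H: "hypergraph ends V E"
    and k: "k > 0"
    and partition: "\<And>V' E' t. hypergraph ends V' E' \<Longrightarrow>
        light ends V' E' (2 * t) (P V' E' t) \<and> t_partition ends V' E' t (P V' E' t)"
  shows "light ends V E (4 * hrank ends E * k) (weak_edges ends P V E k)
       \<and> (\<forall>e\<in>E. k_weak ends V E k e \<longrightarrow> e \<in> weak_edges ends P V E k)"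
proof -
  have sub_partition: "light ends V E' (2 * s) (P V E' s) \<and> t_partition ends V E' s (P V E' s)"
    if "E' \<subseteq> E" for E' s
    using partition hypergraph_mono_edges[OF H that] by blast
  interpret weak_edges_rounds ends V E k P
    using H k sub_partition by unfold_locales auto
  have "weak_edges ends P V E k = removed (1 + nat \<lceil>log 2 (real (card V))\<rceil>)"
    unfolding weak_edges_def removed_def t_def ..
  moreover have "light ends V E (2 * t) (removed i)" for i
    unfolding removed_def using sub_partition by (intro light_weak_edges_iter) blast
  moreover have "2 * t = 4 * hrank ends E * k"
    unfolding t_def by simp
  ultimately show ?thesis
    using weak_subset_removed unfolding weak_def by auto
qed

end
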